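(* Let $K$ be a clique simplicial complex, $X\cup Y=K_0$ a cover of its vertex set, $A:=X\cap Y$, and $P:=\{\sigma\in K\mid\sigma\subset X\text{ or }\sigma\subset Y\text{ or }\sigma\cap A\neq\emptyset\}$. Assume one of the following: (1) there is a vertex $v$ in $\bigcap_{\tau\in K_1\setminus P}\mathrm{St}(\tau,A)$ such that, for every edge $\tau\in K_1\setminus P$ and every vertex $w$ of $\mathrm{St}(\tau,A)$, $\{v,w\}$ is a simplex of $K$; (2) there is a vertex $v$ in $\bigcap_{\tau\in K_1\setminus P}\mathrm{St}(\tau,A)$ such that, for every edge $\tau\in K_1\setminus P$, $v$ is a central vertex of $\mathrm{St}(\tau,A)$; (3) there is $v\in A$ such that for every simplex $\tau$ of $K$ with $|\tau\cap(X\setminus A)|=1$, $|\tau\cap(Y\setminus A)|=1$ and $|\tau\cap A|\le1$, the set $\tau\cup\{v\}$ is a simplex of $K$. Then the inclusion $K_X\cup K_Y\hookrightarrow K$ is a weak equivalence.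
   Context: A simplicial complex is a collection of finite nonempty subsets of a fixed set closed under taking nonempty subsets; $K_0$ is its vertex set, $K_1$ its set of edges, $K_B$ the subcomplex of simplices contained in $B$. $K$ is clique if a set with at least two elements is a simplex iff all its two-element subsets are simplices. $\mathrm{St}(\sigma,A):=\{\mu\subset A\mid 0<|\mu|<\infty,\ \mu\cup\sigma\in K\}$. A simplex $\tau$ of a complex $L$ is central if $\sigma\cup\tau\in L$ for every simplex $\sigma$ of $L$; a vertex $v$ is central if $\{v\}$ is. Homotopical notions refer to geometric realizations. *)

theory Defs
  imports "HOL-Analysis.Analysis"
begin

definition simplicial_complex :: "'a set set \<Rightarrow> bool" where
  "simplicial_complex K \<longleftrightarrow>
     (\<forall>\<sigma>\<in>K. finite \<sigma> \<and> \<sigma> \<noteq> {}) \<and>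
     (\<forall>\<sigma>\<in>K. \<forall>\<mu>. \<mu> \<subseteq> \<sigma> \<and> \<mu> \<noteq> {} \<longrightarrow> \<mu> \<in> K)"

definition vertices :: "'a set set \<Rightarrow> 'a set" where
  "vertices K = {v. {v} \<in> K}"

definition edges :: "'a set set \<Rightarrow> 'a set set" where
  "edges K = {\<sigma>\<in>K. card \<sigma> = 2}"

definition full_subcomplex :: "'a set set \<Rightarrow> 'a set \<Rightarrow> 'a set set" where
  "full_subcomplex K B = {\<sigma>\<in>K. \<sigma> \<subseteq> B}"

definition clique_complex :: "'a set set \<Rightarrow> bool" where
  "clique_complex K \<longleftrightarrow>
     (\<forall>\<sigma>. finite \<sigma> \<and> card \<sigma> \<ge> 2 \<longrightarrow>
        (\<sigma> \<in> K \<longleftrightarrow> (\<forall>u\<in>\<sigma>. \<forall>w\<in>\<sigma>. u \<noteq> w \<longrightarrow> {u, w} \<in> K)))"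

definition St :: "'a set set \<Rightarrow> 'a set \<Rightarrow> 'a set \<Rightarrow> 'a set set" where
  "St K \<sigma> A = {\<mu>. \<mu> \<subseteq> A \<and> \<mu> \<noteq> {} \<and> finite \<mu> \<and> \<mu> \<union> \<sigma> \<in> K}"

definition central_simplex :: "'a set set \<Rightarrow> 'a set \<Rightarrow> bool" where
  "central_simplex L \<tau> \<longleftrightarrow> \<tau> \<in> L \<and> (\<forall>\<sigma>\<in>L. \<sigma> \<union> \<tau> \<in> L)"

definition central_vertex :: "'a set set \<Rightarrow> 'a \<Rightarrow> bool" where
  "central_vertex L v \<longleftrightarrow> central_simplex L {v}"

definition geom_simplex :: "'a set \<Rightarrow> ('a \<Rightarrow> real) set" where
  "geom_simplex \<sigma> = {x. (\<forall>i. 0 \<le> x i) \<and> {i. x i \<noteq> 0} \<subseteq> \<sigma> \<and> sum x \<sigma> = 1}"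

definition geom_realization :: "'a set set \<Rightarrow> ('a \<Rightarrow> real) set" where
  "geom_realization K = (\<Union>\<sigma>\<in>K. geom_simplex \<sigma>)"

definition realization_top :: "'a set set \<Rightarrow> ('a \<Rightarrow> real) topology" where
  "realization_top K = topology (\<lambda>U. U \<subseteq> geom_realization K \<and>
      (\<forall>\<sigma>\<in>K. openin (subtopology (powertop_real UNIV) (geom_simplex \<sigma>))
                      (U \<inter> geom_simplex \<sigma>)))"

definition sphere_base :: "nat \<Rightarrow> real" where
  "sphere_base = (\<lambda>i. if i = 0 then 1 else 0)"

definition pointed_sphere_map :: "nat \<Rightarrow> 'b topology \<Rightarrow> 'b \<Rightarrow> ((nat \<Rightarrow> real) \<Rightarrow> 'b) \<Rightarrow> bool" where
  "pointed_sphere_map n X x0 g \<longleftrightarrow> continuous_map (nsphere n) X g \<and> g sphere_base = x0"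

definition pointed_homotopic :: "nat \<Rightarrow> 'b topology \<Rightarrow> 'b \<Rightarrow> ((nat \<Rightarrow> real) \<Rightarrow> 'b) \<Rightarrow> ((nat \<Rightarrow> real) \<Rightarrow> 'b) \<Rightarrow> bool" where
  "pointed_homotopic n X x0 g h \<longleftrightarrow> homotopic_with (\<lambda>k. k sphere_base = x0) (nsphere n) X g h"

text \<open>f is a weak homotopy equivalence: continuous, and for every n and every base
  point x0 the induced map pi_n(X,x0) -> pi_n(Y,f x0), [g] |-> [f o g], is a bijection
  (pi_n = pointed homotopy classes of pointed maps from the n-sphere; pi_0 as pointed set).\<close>
definition weak_equivalence :: "'b topology \<Rightarrow> 'c topology \<Rightarrow> ('b \<Rightarrow> 'c) \<Rightarrow> bool" where
  "weak_equivalence X Y f \<longleftrightarrow> continuous_map X Y f \<and>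
     (\<forall>n x0. x0 \<in> topspace X \<longrightarrow>
        (\<forall>g. pointed_sphere_map n Y (f x0) g \<longrightarrow>
             (\<exists>h. pointed_sphere_map n X x0 h \<and> pointed_homotopic n Y (f x0) (f \<circ> h) g)) \<and>
        (\<forall>h1 h2. pointed_sphere_map n X x0 h1 \<and> pointed_sphere_map n X x0 h2 \<and>
             pointed_homotopic n Y (f x0) (f \<circ> h1) (f \<circ> h2) \<longrightarrow>
             pointed_homotopic n X x0 h1 h2))"

end

theory Submission
  imports Defs
begin

text \<open>Call a simplex \<^emph>\<open>crossing\<close> if it meets both \<open>X - Y\<close> and \<open>Y - X\<close>; these are the
  simplices of \<open>K\<close> missing from \<open>K\<^sub>X \<union> K\<^sub>Y\<close>. Each of the three hypotheses, combined with the
  clique property, yields a vertex \<open>v \<in> X \<inter> Y\<close> such that \<open>\<sigma> \<union> {v}\<close> is a simplex for every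
  crossing simplex \<open>\<sigma>\<close>.

  Then \<open>|K\<^sub>X \<union> K\<^sub>Y|\<close> is a strong deformation retract of \<open>|K|\<close>. The retraction takes from every
  vertex of \<open>X - Y\<close> the amount \<open>min x\<^sub>i b\<close>, where \<open>b\<close> is the total weight on \<open>Y - X\<close>, symmetrically
  from every vertex of \<open>Y - X\<close>, and puts everything taken onto \<open>v\<close>. This is continuous and empties
  one side: if some vertex of \<open>Y - X\<close> is heavier than all of \<open>X - Y\<close>, then every vertex of \<open>X - Y\<close>
  is drained completely, and otherwise every vertex of \<open>Y - X\<close> is. The straight-line homotopy
  to the identity stays inside \<open>\<sigma> \<union> {v}\<close>, and since \<open>[0,1]\<close> is compact it is continuous for the
  weak topology.\<close>

lemma geom_simplexI:
  "(\<And>i. 0 \<le> x i) \<Longrightarrow> (\<And>i. i \<notin> \<sigma> \<Longrightarrow> x i = 0) \<Longrightarrow> sum x \<sigma> = 1 \<Longrightarrow> x \<in> geom_simplex \<sigma>"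
  by (auto simp: geom_simplex_def)

lemma geom_simplex_nonneg: "x \<in> geom_simplex \<sigma> \<Longrightarrow> 0 \<le> x i"
  by (simp add: geom_simplex_def)

lemma geom_simplex_support: "x \<in> geom_simplex \<sigma> \<Longrightarrow> {i. x i \<noteq> 0} \<subseteq> \<sigma>"
  by (simp add: geom_simplex_def)

lemma geom_simplex_zero: "x \<in> geom_simplex \<sigma> \<Longrightarrow> i \<notin> \<sigma> \<Longrightarrow> x i = 0"
  by (auto simp: geom_simplex_def)

lemma geom_simplex_sum: "x \<in> geom_simplex \<sigma> \<Longrightarrow> sum x \<sigma> = 1"
  by (simp add: geom_simplex_def)

lemma geom_simplex_mono:
  assumes "x \<in> geom_simplex \<sigma>" "\<sigma> \<subseteq> \<tau>" "finite \<tau>"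
  shows "x \<in> geom_simplex \<tau>"
proof (rule geom_simplexI)
  have "sum x \<tau> = sum x \<sigma>"
    using assms by (intro sum.mono_neutral_right) (auto simp: geom_simplex_zero)
  then show "sum x \<tau> = 1" using geom_simplex_sum[OF assms(1)] by simp
  show "x i = 0" if "i \<notin> \<tau>" for i
    using that assms(2) geom_simplex_zero[OF assms(1)] by blast
qed (rule geom_simplex_nonneg[OF assms(1)])

lemma geom_simplex_restrict:
  assumes "x \<in> geom_simplex \<tau>" "finite \<tau>" "\<And>i. i \<in> \<tau> \<Longrightarrow> i \<notin> S \<Longrightarrow> x i = 0"
  shows "x \<in> geom_simplex (\<tau> \<inter> S)"
proof (rule geom_simplexI)
  have "sum x (\<tau> \<inter> S) = sum x \<tau>"
    using assms by (intro sum.mono_neutral_left) auto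
  then show "sum x (\<tau> \<inter> S) = 1" using geom_simplex_sum[OF assms(1)] by simp
  show "x i = 0" if "i \<notin> \<tau> \<inter> S" for i
    using that assms(3) geom_simplex_zero[OF assms(1)] by blast
qed (rule geom_simplex_nonneg[OF assms(1)])

lemma geom_simplex_segment:
  assumes "x \<in> geom_simplex \<tau>" "y \<in> geom_simplex \<tau>" "0 \<le> t" "t \<le> 1"
  shows "(\<lambda>i. t * x i + (1 - t) * y i) \<in> geom_simplex \<tau>"
proof (rule geom_simplexI)
  show "0 \<le> t * x i + (1 - t) * y i" for i
    using assms geom_simplex_nonneg[OF assms(1)] geom_simplex_nonneg[OF assms(2)] by simp
  show "(\<Sum>i\<in>\<tau>. t * x i + (1 - t) * y i) = 1"
    using geom_simplex_sum[OF assms(1)] geom_simplex_sum[OF assms(2)]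
    by (simp add: sum.distrib sum_distrib_left[symmetric])
  show "t * x i + (1 - t) * y i = 0" if "i \<notin> \<tau>" for i
    using geom_simplex_zero[OF assms(1) that] geom_simplex_zero[OF assms(2) that] by simp
qed

lemma continuous_on_coordinate [continuous_intros]: "continuous_on S (\<lambda>x :: 'a \<Rightarrow> real. x i)"
  by (rule continuous_on_subset[OF continuous_on_product_coordinates]) auto

lemma closed_geom_simplex:
  assumes "finite \<sigma>"
  shows "closed (geom_simplex \<sigma>)"
proof -
  have eq: "geom_simplex \<sigma> =
      (\<Inter>i. {x. 0 \<le> x i}) \<inter> (\<Inter>i\<in>-\<sigma>. {x. x i = 0}) \<inter> {x. (\<Sum>i\<in>\<sigma>. x i) = 1}"
    by (auto simp: geom_simplex_def)
  show ?thesis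
    unfolding eq
    by (intro closed_Int closed_INT ballI allI closed_Collect_le closed_Collect_eq
        continuous_intros)
qed

section \<open>The weak topology\<close>

lemma openin_realization_top:
  "openin (realization_top K) U \<longleftrightarrow> U \<subseteq> geom_realization K \<and>
      (\<forall>\<sigma>\<in>K. openin (top_of_set (geom_simplex \<sigma>)) (U \<inter> geom_simplex \<sigma>))"
proof -
  define weakly_open where "weakly_open U \<longleftrightarrow> U \<subseteq> geom_realization K \<and>
      (\<forall>\<sigma>\<in>K. openin (top_of_set (geom_simplex \<sigma>)) (U \<inter> geom_simplex \<sigma>))" for U
  have "istopology weakly_open"
    unfolding istopology_def
  proof (intro conjI allI impI)
    fix S T assume S: "weakly_open S" and T: "weakly_open T"
    have "openin (top_of_set (geom_simplex \<sigma>)) (S \<inter> T \<inter> geom_simplex \<sigma>)" if "\<sigma> \<in> K" for \<sigma>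
    proof -
      have "openin (top_of_set (geom_simplex \<sigma>)) ((S \<inter> geom_simplex \<sigma>) \<inter> (T \<inter> geom_simplex \<sigma>))"
        using that S T unfolding weakly_open_def by (meson openin_Int)
      moreover have "(S \<inter> geom_simplex \<sigma>) \<inter> (T \<inter> geom_simplex \<sigma>) = S \<inter> T \<inter> geom_simplex \<sigma>"
        by blast
      ultimately show ?thesis by simp
    qed
    with S show "weakly_open (S \<inter> T)"
      unfolding weakly_open_def by blast
  next
    fix \<U> assume \<U>: "\<forall>S\<in>\<U>. weakly_open S"
    have "openin (top_of_set (geom_simplex \<sigma>)) (\<Union>\<U> \<inter> geom_simplex \<sigma>)" if "\<sigma> \<in> K" for \<sigma>
      unfolding Int_Union2 using that \<U> unfolding weakly_open_def by (intro openin_Union) blast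
    with \<U> show "weakly_open (\<Union>\<U>)"
      unfolding weakly_open_def by blast
  qed
  then show ?thesis
    unfolding weakly_open_def by (simp add: realization_top_def euclidean_product_topology)
qed

lemma topspace_realization_top [simp]: "topspace (realization_top K) = geom_realization K"
proof -
  have "geom_realization K \<inter> geom_simplex \<sigma> = topspace (top_of_set (geom_simplex \<sigma>))"
    if "\<sigma> \<in> K" for \<sigma>
    using that by (auto simp: geom_realization_def)
  then have "openin (realization_top K) (geom_realization K)"
    unfolding openin_realization_top by (metis openin_topspace order.refl)
  then show ?thesis
    by (metis openin_realization_top openin_subset openin_topspace subset_antisym)
qed

lemma openin_Union_geom_simplices:
  assumes U: "openin (realization_top K) U" and T: "finite T" "T \<subseteq> K" "\<forall>\<sigma>\<in>K. finite \<sigma>"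
  shows "openin (top_of_set (\<Union>(geom_simplex ` T))) (\<Union>(geom_simplex ` T) \<inter> U)"
proof -
  have "closed (geom_simplex \<tau> - U)" if "\<tau> \<in> T" for \<tau>
  proof -
    have "openin (top_of_set (geom_simplex \<tau>)) (U \<inter> geom_simplex \<tau>)"
      using U that T(2) by (auto simp: openin_realization_top)
    then have "closedin (top_of_set (geom_simplex \<tau>)) (geom_simplex \<tau> - U \<inter> geom_simplex \<tau>)"
      by (metis openin_closedin_eq topspace_euclidean_subtopology)
    then have "closedin (top_of_set (geom_simplex \<tau>)) (geom_simplex \<tau> - U)"
      by (metis Diff_Int2 Int_absorb)
    moreover have "closed (geom_simplex \<tau>)"
      using that T by (intro closed_geom_simplex) auto
    ultimately show ?thesis
      by (rule closedin_closed_trans)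
  qed
  then have "closed (\<Union>\<tau>\<in>T. geom_simplex \<tau> - U)"
    using T(1) by (intro closed_UN) auto
  then have "openin (top_of_set (\<Union>(geom_simplex ` T)))
      (\<Union>(geom_simplex ` T) \<inter> - (\<Union>\<tau>\<in>T. geom_simplex \<tau> - U))"
    by (intro openin_open_Int) (simp only: open_Compl)
  moreover have "\<Union>(geom_simplex ` T) \<inter> - (\<Union>\<tau>\<in>T. geom_simplex \<tau> - U) = \<Union>(geom_simplex ` T) \<inter> U"
    by blast
  ultimately show ?thesis by simp
qed

lemma openin_preimage_realization_top:
  assumes U: "openin (realization_top K) U" and K: "\<forall>\<sigma>\<in>K. finite \<sigma>"
    and T: "finite T" "T \<subseteq> K"
    and F: "continuous_on D F" "F ` D \<subseteq> \<Union>(geom_simplex ` T)"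
  shows "openin (top_of_set D) {z \<in> D. F z \<in> U}"
proof -
  have "openin (top_of_set D) (D \<inter> F -` (\<Union>(geom_simplex ` T) \<inter> U))"
    using openin_Union_geom_simplices[OF U T K] F by (intro continuous_openin_preimage) auto
  moreover have "D \<inter> F -` (\<Union>(geom_simplex ` T) \<inter> U) = {z \<in> D. F z \<in> U}"
    using F(2) by blast
  ultimately show ?thesis by simp
qed

lemma continuous_map_realization_top:
  assumes K': "\<forall>\<sigma>\<in>K'. finite \<sigma>"
    and G: "\<And>\<sigma>. \<sigma> \<in> K \<Longrightarrow> \<exists>T. finite T \<and> T \<subseteq> K' \<and>
        G ` geom_simplex \<sigma> \<subseteq> \<Union>(geom_simplex ` T) \<and> continuous_on (geom_simplex \<sigma>) G"
  shows "continuous_map (realization_top K) (realization_top K') G"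
  unfolding continuous_map_def
proof (intro conjI allI impI)
  show "G \<in> topspace (realization_top K) \<rightarrow> topspace (realization_top K')"
    using G by (fastforce simp: geom_realization_def)
  fix U assume U: "openin (realization_top K') U"
  have "openin (top_of_set (geom_simplex \<sigma>)) {x \<in> geom_simplex \<sigma>. G x \<in> U}" if "\<sigma> \<in> K" for \<sigma>
    using G[OF that] openin_preimage_realization_top[OF U K'] by blast
  moreover have "{x \<in> geom_realization K. G x \<in> U} \<inter> geom_simplex \<sigma> = {x \<in> geom_simplex \<sigma>. G x \<in> U}"
    if "\<sigma> \<in> K" for \<sigma>
    using that by (auto simp: geom_realization_def)
  ultimately show "openin (realization_top K) {x \<in> topspace (realization_top K). G x \<in> U}"
    unfolding openin_realization_top by auto
qed

lemma continuous_map_realization_top_subcomplex: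
  assumes "L \<subseteq> K" "\<forall>\<sigma>\<in>K. finite \<sigma>"
  shows "continuous_map (realization_top L) (realization_top K) (\<lambda>x. x)"
proof (rule continuous_map_realization_top[OF assms(2)])
  fix \<sigma> assume "\<sigma> \<in> L"
  with assms(1) show "\<exists>T. finite T \<and> T \<subseteq> K \<and> (\<lambda>x. x) ` geom_simplex \<sigma> \<subseteq> \<Union>(geom_simplex ` T) \<and>
      continuous_on (geom_simplex \<sigma>) (\<lambda>x. x)"
    by (intro exI[of _ "{\<sigma>}"]) (auto intro: continuous_on_id)
qed

lemma openin_realization_top_slices:
  fixes C I :: "'b::metric_space set"
  assumes W: "\<And>\<sigma>. \<sigma> \<in> K \<Longrightarrow> openin (top_of_set (I \<times> geom_simplex \<sigma>)) ((I \<times> geom_simplex \<sigma>) \<inter> W)"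
    and C: "compact C" "C \<subseteq> I"
  shows "openin (realization_top K) {x \<in> geom_realization K. C \<times> {x} \<subseteq> W}"
  unfolding openin_realization_top
proof (intro conjI ballI)
  fix \<sigma> assume \<sigma>: "\<sigma> \<in> K"
  let ?V = "{x \<in> geom_realization K. C \<times> {x} \<subseteq> W} \<inter> geom_simplex \<sigma>"
  show "openin (top_of_set (geom_simplex \<sigma>)) ?V"
  proof (subst openin_subopen, intro ballI)
    fix x assume x: "x \<in> ?V"
    have "openin (prod_topology (top_of_set I) (top_of_set (geom_simplex \<sigma>)))
        ((I \<times> geom_simplex \<sigma>) \<inter> W)"
      using W[OF \<sigma>] by simp
    moreover have "compactin (top_of_set I) C"
      using C by (simp add: compactin_subtopology)
    moreover have "x \<in> topspace (top_of_set (geom_simplex \<sigma>))"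
      using x by simp
    moreover have "C \<times> {x} \<subseteq> (I \<times> geom_simplex \<sigma>) \<inter> W"
      using x C(2) by auto
    ultimately obtain U' V' where UV: "openin (top_of_set (geom_simplex \<sigma>)) V'" "x \<in> V'"
        "C \<subseteq> U'" "U' \<times> V' \<subseteq> (I \<times> geom_simplex \<sigma>) \<inter> W"
      by (metis tube_lemma_left)
    have "V' \<subseteq> ?V"
      using UV(3,4) openin_subset[OF UV(1)] \<sigma> by (auto simp: geom_realization_def)
    then show "\<exists>T. openin (top_of_set (geom_simplex \<sigma>)) T \<and> x \<in> T \<and> T \<subseteq> ?V"
      using UV by blast
  qed
qed auto

lemma openin_prod_realization_top:
  fixes I :: "'b::metric_space set"
  assumes I: "compact I" and W_sub: "W \<subseteq> I \<times> geom_realization K"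
    and W: "\<And>\<sigma>. \<sigma> \<in> K \<Longrightarrow> openin (top_of_set (I \<times> geom_simplex \<sigma>)) ((I \<times> geom_simplex \<sigma>) \<inter> W)"
  shows "openin (prod_topology (top_of_set I) (realization_top K)) W"
proof (subst openin_subopen, intro ballI)
  fix z assume "z \<in> W"
  then obtain t0 x0 \<sigma>0 where z: "z = (t0, x0)" "t0 \<in> I" "\<sigma>0 \<in> K" "x0 \<in> geom_simplex \<sigma>0"
    using W_sub by (auto simp: geom_realization_def)
  have "openin (prod_topology (top_of_set I) (top_of_set (geom_simplex \<sigma>0)))
      ((I \<times> geom_simplex \<sigma>0) \<inter> W)"
    using W[OF z(3)] by simp
  moreover have "{t0} \<times> {x0} \<subseteq> (I \<times> geom_simplex \<sigma>0) \<inter> W"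
    using z \<open>z \<in> W\<close> by auto
  moreover have "compactin (top_of_set I) {t0}" "x0 \<in> topspace (top_of_set (geom_simplex \<sigma>0))"
    using z by (auto simp: compactin_subtopology)
  ultimately obtain J0 V0 where J0: "openin (top_of_set I) J0" "t0 \<in> J0" "x0 \<in> V0"
      "J0 \<times> V0 \<subseteq> (I \<times> geom_simplex \<sigma>0) \<inter> W"
    by (metis tube_lemma_left insert_subset)
  obtain e where e: "e > 0" "\<And>t. t \<in> I \<Longrightarrow> dist t t0 < e \<Longrightarrow> t \<in> J0"
    using J0(1,2) openin_euclidean_subtopology_iff by metis
  \<comment> \<open>a compact neighbourhood of \<open>t0\<close>, so that the tube lemma applies at every point of \<open>V\<close>\<close>
  define C where "C = cball t0 (e/2) \<inter> I"
  define J where "J = I \<inter> ball t0 (e/2)"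
  define V where "V = {x \<in> geom_realization K. C \<times> {x} \<subseteq> W}"
  have "openin (realization_top K) V"
    unfolding V_def C_def using I W
    by (intro openin_realization_top_slices) (auto intro: compact_Int_closed)
  moreover have "x0 \<in> V"
    using z J0 e by (fastforce simp: V_def C_def geom_realization_def dist_commute)
  moreover have "openin (top_of_set I) J" "t0 \<in> J"
    using z e by (auto simp: J_def openin_open_Int)
  moreover have "J \<times> V \<subseteq> W"
    by (auto simp: J_def V_def C_def)
  ultimately show "\<exists>T. openin (prod_topology (top_of_set I) (realization_top K)) T \<and> z \<in> T \<and> T \<subseteq> W"
    using z by (intro exI[of _ "J \<times> V"]) (auto simp: openin_prod_Times_iff)
qed

lemma continuous_map_prod_realization_top:
  fixes I :: "'b::metric_space set"
  assumes I: "compact I" and K': "\<forall>\<sigma>\<in>K'. finite \<sigma>"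
    and F: "\<And>\<sigma>. \<sigma> \<in> K \<Longrightarrow> \<exists>T. finite T \<and> T \<subseteq> K' \<and>
        F ` (I \<times> geom_simplex \<sigma>) \<subseteq> \<Union>(geom_simplex ` T) \<and> continuous_on (I \<times> geom_simplex \<sigma>) F"
  shows "continuous_map (prod_topology (top_of_set I) (realization_top K)) (realization_top K') F"
  unfolding continuous_map_def
proof (intro conjI allI impI)
  show "F \<in> topspace (prod_topology (top_of_set I) (realization_top K)) \<rightarrow>
      topspace (realization_top K')"
    using F by (fastforce simp: geom_realization_def)
  fix U assume U: "openin (realization_top K') U"
  have "openin (top_of_set (I \<times> geom_simplex \<sigma>))
      ((I \<times> geom_simplex \<sigma>) \<inter> {z \<in> I \<times> geom_realization K. F z \<in> U})"
    if "\<sigma> \<in> K" for \<sigma>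
  proof -
    have "(I \<times> geom_simplex \<sigma>) \<inter> {z \<in> I \<times> geom_realization K. F z \<in> U} =
        {z \<in> I \<times> geom_simplex \<sigma>. F z \<in> U}"
      using that by (auto simp: geom_realization_def)
    then show ?thesis
      using F[OF that] openin_preimage_realization_top[OF U K'] by auto
  qed
  then show "openin (prod_topology (top_of_set I) (realization_top K))
      {z \<in> topspace (prod_topology (top_of_set I) (realization_top K)). F z \<in> U}"
    by (auto intro!: openin_prod_realization_top[OF I])
qed

section \<open>Deformation retracts are weak equivalences\<close>

lemma sphere_base_in_topspace: "sphere_base \<in> topspace (nsphere n)"
  using in_topspace_nsphere by (simp add: sphere_base_def)

lemma weak_equivalence_deformation_retract:
  assumes incl: "continuous_map S T (\<lambda>x. x)"
    and r: "continuous_map T S r" and r_id: "\<And>x. x \<in> topspace S \<Longrightarrow> r x = x"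
    and hom: "homotopic_with (\<lambda>h. \<forall>x\<in>topspace S. h x = x) T T r (\<lambda>x. x)"
  shows "weak_equivalence S T (\<lambda>x. x)"
  unfolding weak_equivalence_def
proof (intro conjI incl allI impI)
  fix n x0 assume x0: "x0 \<in> topspace S"
  show "\<exists>h. pointed_sphere_map n S x0 h \<and> pointed_homotopic n T x0 ((\<lambda>x. x) \<circ> h) g"
    if g: "pointed_sphere_map n T x0 g" for g
  proof (intro exI conjI)
    have gc: "continuous_map (nsphere n) T g" and gb: "g sphere_base = x0"
      using g by (auto simp: pointed_sphere_map_def)
    show "pointed_sphere_map n S x0 (r \<circ> g)"
      using gc gb r r_id[OF x0] by (auto simp: pointed_sphere_map_def intro: continuous_map_compose)
    have "homotopic_with (\<lambda>k. k sphere_base = x0) (nsphere n) T (r \<circ> g) ((\<lambda>x. x) \<circ> g)"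
      using homotopic_with_compose_continuous_map_right[OF hom gc] x0 gb by simp
    then show "pointed_homotopic n T x0 ((\<lambda>x. x) \<circ> (r \<circ> g)) g"
      by (simp add: pointed_homotopic_def o_def)
  qed
  show "pointed_homotopic n S x0 h1 h2"
    if "pointed_sphere_map n S x0 h1 \<and> pointed_sphere_map n S x0 h2 \<and>
        pointed_homotopic n T x0 ((\<lambda>x. x) \<circ> h1) ((\<lambda>x. x) \<circ> h2)" for h1 h2
  proof -
    have h: "continuous_map (nsphere n) S h1" "continuous_map (nsphere n) S h2"
      and hh: "homotopic_with (\<lambda>k. k sphere_base = x0) (nsphere n) T h1 h2"
      using that by (auto simp: pointed_sphere_map_def pointed_homotopic_def o_def)
    have "homotopic_with (\<lambda>k. k sphere_base = x0) (nsphere n) S (r \<circ> h1) (r \<circ> h2)"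
      using homotopic_with_compose_continuous_map_left[OF hh r] r_id[OF x0] by simp
    then show ?thesis
      unfolding pointed_homotopic_def
    proof (rule homotopic_with_eq)
      show "h1 x = (r \<circ> h1) x" "h2 x = (r \<circ> h2) x" if "x \<in> topspace (nsphere n)" for x
        using that continuous_map_image_subset_topspace[OF h(1)]
          continuous_map_image_subset_topspace[OF h(2)] r_id by (auto simp: image_subset_iff)
    qed (simp add: sphere_base_in_topspace)
  qed
qed

section \<open>Draining two disjoint vertex sets onto a vertex\<close>

definition mass :: "'a set \<Rightarrow> ('a \<Rightarrow> real) \<Rightarrow> real" where
  "mass S x = sum x {i \<in> S. x i \<noteq> 0}"

definition drained :: "'a set \<Rightarrow> 'a set \<Rightarrow> ('a \<Rightarrow> real) \<Rightarrow> 'a \<Rightarrow> real" where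
  "drained P Q x i =
     (if i \<in> P then min (x i) (mass Q x) else if i \<in> Q then min (x i) (mass P x) else 0)"

text \<open>The total is summed over the support of \<open>x\<close>, so that \<open>drain_to\<close> is a single map on the
  whole realization, independent of a carrier simplex.\<close>
definition drain_to :: "'a \<Rightarrow> 'a set \<Rightarrow> 'a set \<Rightarrow> ('a \<Rightarrow> real) \<Rightarrow> 'a \<Rightarrow> real" where
  "drain_to v P Q x =
     (\<lambda>i. x i - drained P Q x i + (if i = v then sum (drained P Q x) {j. x j \<noteq> 0} else 0))"

lemma mass_eq_sum:
  assumes "x \<in> geom_simplex \<sigma>" "finite \<sigma>"
  shows "mass S x = sum x (\<sigma> \<inter> S)"
  unfolding mass_def using assms geom_simplex_support[OF assms(1)]
  by (intro sum.mono_neutral_left) auto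

lemma mass_nonneg: "x \<in> geom_simplex \<sigma> \<Longrightarrow> 0 \<le> mass S x"
  unfolding mass_def by (intro sum_nonneg) (auto simp: geom_simplex_nonneg)

lemma drained_eq_0: "x \<in> geom_simplex \<sigma> \<Longrightarrow> x i = 0 \<Longrightarrow> drained P Q x i = 0"
  unfolding drained_def using mass_nonneg[of x \<sigma> P] mass_nonneg[of x \<sigma> Q] by auto

lemma drained_nonneg: "x \<in> geom_simplex \<sigma> \<Longrightarrow> 0 \<le> drained P Q x i"
  unfolding drained_def using mass_nonneg geom_simplex_nonneg by auto

lemma drained_le: "x \<in> geom_simplex \<sigma> \<Longrightarrow> drained P Q x i \<le> x i"
  unfolding drained_def using geom_simplex_nonneg by auto

lemma sum_drained_support:
  assumes "x \<in> geom_simplex \<sigma>" "finite \<sigma>"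
  shows "sum (drained P Q x) {j. x j \<noteq> 0} = sum (drained P Q x) \<sigma>"
  using assms geom_simplex_support[OF assms(1)]
  by (intro sum.mono_neutral_left) (auto simp: drained_eq_0)

lemma drain_to_eq_self:
  assumes x: "x \<in> geom_simplex \<sigma>" and fin: "finite \<sigma>" and disj: "\<sigma> \<inter> P = {} \<or> \<sigma> \<inter> Q = {}"
  shows "drain_to v P Q x = x"
proof -
  have "drained P Q x i = 0" for i
  proof (cases "x i = 0")
    case False
    then have "i \<in> \<sigma>"
      using geom_simplex_zero[OF x] by blast
    with disj have "mass P x = 0 \<and> i \<notin> P \<or> mass Q x = 0 \<and> i \<notin> Q"
      using mass_eq_sum[OF x fin] by auto
    then show ?thesis
      unfolding drained_def using geom_simplex_nonneg[OF x, of i] mass_nonneg[OF x] by auto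
  qed (simp add: drained_eq_0[OF x])
  then show ?thesis
    unfolding drain_to_def by (simp add: fun_eq_iff)
qed

lemma drain_to_in_geom_simplex:
  assumes x: "x \<in> geom_simplex \<sigma>" and fin: "finite \<sigma>" and v: "v \<notin> P" "v \<notin> Q"
  shows "drain_to v P Q x \<in> geom_simplex (insert v \<sigma>)"
proof (rule geom_simplexI)
  let ?D = "drained P Q x"
  have "?D v = 0"
    using v by (simp add: drained_def)
  have "0 \<le> sum ?D {j. x j \<noteq> 0}"
    by (intro sum_nonneg) (simp add: drained_nonneg[OF x])
  then show "0 \<le> drain_to v P Q x i" for i
    using drained_le[OF x, of P Q i] unfolding drain_to_def by auto
  show "drain_to v P Q x i = 0" if "i \<notin> insert v \<sigma>" for i
    using that geom_simplex_zero[OF x] drained_eq_0[OF x] unfolding drain_to_def by auto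
  have "sum (drain_to v P Q x) (insert v \<sigma>) =
      sum x (insert v \<sigma>) - sum ?D (insert v \<sigma>) + sum ?D \<sigma>"
    unfolding drain_to_def using fin sum_drained_support[OF x fin]
    by (simp add: sum.distrib sum_subtractf)
  also have "sum x (insert v \<sigma>) = sum x \<sigma>"
    using fin geom_simplex_zero[OF x] by (cases "v \<in> \<sigma>") (auto simp: insert_absorb)
  also have "sum ?D (insert v \<sigma>) = sum ?D \<sigma>"
    using fin \<open>?D v = 0\<close> by (cases "v \<in> \<sigma>") (auto simp: insert_absorb)
  finally show "sum (drain_to v P Q x) (insert v \<sigma>) = 1"
    using geom_simplex_sum[OF x] by simp
qed

lemma drain_to_empties_one_side:
  assumes x: "x \<in> geom_simplex \<sigma>" and fin: "finite \<sigma>"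
    and v: "v \<notin> P" "v \<notin> Q" and disj: "P \<inter> Q = {}"
  shows "(\<forall>i\<in>Q. drain_to v P Q x i = 0) \<or> (\<forall>i\<in>P. drain_to v P Q x i = 0)"
proof -
  have vanish: "drain_to v P Q x i = 0"
    if "i \<in> P \<union> Q" "i \<in> \<sigma> \<Longrightarrow> drained P Q x i = x i" for i
  proof (cases "i \<in> \<sigma>")
    case False
    then show ?thesis
      using that v geom_simplex_zero[OF x] drained_eq_0[OF x] unfolding drain_to_def by auto
  qed (use that v in \<open>auto simp: drain_to_def\<close>)
  have le_mass: "x i \<le> mass S x" if "i \<in> \<sigma> \<inter> S" for i S
    unfolding mass_eq_sum[OF x fin] using that fin geom_simplex_nonneg[OF x]
    by (intro member_le_sum) auto
  show ?thesis
  proof (cases "\<forall>j\<in>\<sigma> \<inter> Q. x j \<le> mass P x")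
    case True
    then have "drained P Q x i = x i" if "i \<in> Q" "i \<in> \<sigma>" for i
      using that disj by (auto simp: drained_def)
    then show ?thesis
      using vanish by blast
  next
    case False
    then obtain j where j: "j \<in> \<sigma> \<inter> Q" "mass P x < x j"
      by force
    then have "drained P Q x i = x i" if "i \<in> P" "i \<in> \<sigma>" for i
      using that le_mass[of i P] le_mass[OF j(1)] by (auto simp: drained_def)
    then show ?thesis
      using vanish by blast
  qed
qed

lemma continuous_on_drained:
  assumes fin: "finite \<sigma>"
  shows "continuous_on (geom_simplex \<sigma>) (\<lambda>x. drained P Q x i)"
proof (rule continuous_on_eq)
  show "continuous_on (geom_simplex \<sigma>) (\<lambda>x. if i \<in> P then min (x i) (sum x (\<sigma> \<inter> Q))
      else if i \<in> Q then min (x i) (sum x (\<sigma> \<inter> P)) else 0)"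
    by (cases "i \<in> P"; cases "i \<in> Q") (auto intro!: continuous_intros)
qed (simp add: drained_def mass_eq_sum fin)

lemma continuous_on_drain_to:
  assumes fin: "finite \<sigma>"
  shows "continuous_on (geom_simplex \<sigma>) (drain_to v P Q)"
proof -
  have "continuous_on (geom_simplex \<sigma>) (\<lambda>x. sum (drained P Q x) {j. x j \<noteq> 0})"
    by (rule continuous_on_eq[of _ "\<lambda>x. \<Sum>j\<in>\<sigma>. drained P Q x j"])
      (auto intro!: continuous_on_sum continuous_on_drained simp: fin sum_drained_support)
  then have "continuous_on (geom_simplex \<sigma>)
      (\<lambda>x. if i = v then sum (drained P Q x) {j. x j \<noteq> 0} else 0)" for i
    by (cases "i = v") auto
  then show ?thesis
    unfolding drain_to_def
    by (intro continuous_on_coordinatewise_then_product continuous_intros continuous_on_drained fin)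
qed

lemma continuous_on_segment_homotopy:
  assumes "continuous_on S f"
  shows "continuous_on ({0..1::real} \<times> S) (\<lambda>(t, x). (\<lambda>i. t * x i + (1 - t) * f x i))"
  unfolding case_prod_unfold
proof (rule continuous_on_coordinatewise_then_product)
  fix i
  have "continuous_on ({0..1::real} \<times> S) (\<lambda>z. f (snd z) i)"
    by (rule continuous_on_compose2[OF continuous_on_product_then_coordinatewise[OF assms]])
      (auto intro: continuous_on_snd)
  moreover have "continuous_on ({0..1::real} \<times> S) (\<lambda>z. snd z i)"
    by (rule continuous_on_compose2[OF continuous_on_coordinate[of UNIV i]])
      (auto intro: continuous_on_snd)
  ultimately show "continuous_on ({0..1} \<times> S) (\<lambda>z. fst z * snd z i + (1 - fst z) * f (snd z) i)"
    by (intro continuous_intros)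
qed

section \<open>Coning off the crossing simplices\<close>

lemma simplicial_complex_finite: "simplicial_complex K \<Longrightarrow> \<sigma> \<in> K \<Longrightarrow> finite \<sigma>"
  by (simp add: simplicial_complex_def)

lemma simplicial_complex_face:
  "simplicial_complex K \<Longrightarrow> \<sigma> \<in> K \<Longrightarrow> \<mu> \<subseteq> \<sigma> \<Longrightarrow> \<mu> \<noteq> {} \<Longrightarrow> \<mu> \<in> K"
  unfolding simplicial_complex_def by blast

lemma simplex_subset_vertices: "simplicial_complex K \<Longrightarrow> \<sigma> \<in> K \<Longrightarrow> \<sigma> \<subseteq> vertices K"
  unfolding vertices_def by (auto intro: simplicial_complex_face)

definition crossing :: "'a set \<Rightarrow> 'a set \<Rightarrow> 'a set \<Rightarrow> bool" where
  "crossing X Y \<sigma> \<longleftrightarrow> \<sigma> \<inter> (X - Y) \<noteq> {} \<and> \<sigma> \<inter> (Y - X) \<noteq> {}"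

locale cone_over_crossings =
  fixes K :: "'a set set" and X Y :: "'a set" and v :: 'a
  assumes simplicial: "simplicial_complex K" and cover: "X \<union> Y = vertices K"
    and cone: "\<And>\<sigma>. \<sigma> \<in> K \<Longrightarrow> crossing X Y \<sigma> \<Longrightarrow> v \<in> X \<inter> Y \<and> insert v \<sigma> \<in> K"
begin

abbreviation KXY :: "'a set set" where
  "KXY \<equiv> full_subcomplex K X \<union> full_subcomplex K Y"

abbreviation retraction :: "('a \<Rightarrow> real) \<Rightarrow> 'a \<Rightarrow> real" where
  "retraction \<equiv> drain_to v (X - Y) (Y - X)"

lemma finite_simplices: "\<forall>\<sigma>\<in>K. finite \<sigma>"
  using simplicial simplicial_complex_finite by blast

lemma noncrossing_simplex:
  assumes "\<sigma> \<in> K" "\<not> crossing X Y \<sigma>"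
  shows "\<sigma> \<in> KXY" and "x \<in> geom_simplex \<sigma> \<Longrightarrow> retraction x = x"
proof -
  have "\<sigma> \<subseteq> X \<union> Y"
    using simplex_subset_vertices[OF simplicial assms(1)] cover by simp
  with assms show "\<sigma> \<in> KXY"
    by (auto simp: crossing_def full_subcomplex_def)
  show "retraction x = x" if "x \<in> geom_simplex \<sigma>"
    using assms(2) drain_to_eq_self[OF that simplicial_complex_finite[OF simplicial assms(1)]]
    by (auto simp: crossing_def)
qed

lemma crossing_simplex_faces:
  assumes \<sigma>: "\<sigma> \<in> K" "crossing X Y \<sigma>"
  shows "insert v \<sigma> \<inter> X \<in> KXY" "insert v \<sigma> \<inter> Y \<in> KXY"
proof -
  have v: "v \<in> X \<inter> Y" and cone_\<sigma>: "insert v \<sigma> \<in> K"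
    using cone[OF \<sigma>] by auto
  then have "insert v \<sigma> \<inter> X \<in> K" "insert v \<sigma> \<inter> Y \<in> K"
    by (auto intro: simplicial_complex_face[OF simplicial cone_\<sigma>])
  then show "insert v \<sigma> \<inter> X \<in> KXY" "insert v \<sigma> \<inter> Y \<in> KXY"
    by (auto simp: full_subcomplex_def)
qed

lemma retraction_crossing_simplex:
  assumes \<sigma>: "\<sigma> \<in> K" "crossing X Y \<sigma>" and x: "x \<in> geom_simplex \<sigma>"
  shows "retraction x \<in> geom_simplex (insert v \<sigma>)"
    and "retraction x \<in> geom_simplex (insert v \<sigma> \<inter> X) \<or>
      retraction x \<in> geom_simplex (insert v \<sigma> \<inter> Y)"
proof -
  have v: "v \<in> X \<inter> Y" and cone_\<sigma>: "insert v \<sigma> \<in> K"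
    using cone[OF \<sigma>] by auto
  have fin: "finite \<sigma>"
    using simplicial_complex_finite[OF simplicial \<sigma>(1)] .
  show r_in: "retraction x \<in> geom_simplex (insert v \<sigma>)"
    using drain_to_in_geom_simplex[OF x fin] v by auto
  have "insert v \<sigma> \<subseteq> X \<union> Y"
    using simplex_subset_vertices[OF simplicial cone_\<sigma>] cover by simp
  moreover have "(\<forall>i\<in>Y - X. retraction x i = 0) \<or> (\<forall>i\<in>X - Y. retraction x i = 0)"
    using drain_to_empties_one_side[OF x fin, of v "X - Y" "Y - X"] v by auto
  ultimately show "retraction x \<in> geom_simplex (insert v \<sigma> \<inter> X) \<or>
      retraction x \<in> geom_simplex (insert v \<sigma> \<inter> Y)"
    using geom_simplex_restrict[OF r_in] fin by (metis Diff_iff Un_iff finite_insert subsetD)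
qed

lemma continuous_map_retraction:
  "continuous_map (realization_top K) (realization_top KXY) retraction"
proof (rule continuous_map_realization_top)
  show "\<forall>\<sigma>\<in>KXY. finite \<sigma>"
    using finite_simplices by (auto simp: full_subcomplex_def)
  fix \<sigma> assume \<sigma>: "\<sigma> \<in> K"
  have cont: "continuous_on (geom_simplex \<sigma>) retraction"
    using \<sigma> finite_simplices by (intro continuous_on_drain_to) auto
  show "\<exists>T. finite T \<and> T \<subseteq> KXY \<and> retraction ` geom_simplex \<sigma> \<subseteq> \<Union>(geom_simplex ` T) \<and>
      continuous_on (geom_simplex \<sigma>) retraction"
  proof (cases "crossing X Y \<sigma>")
    case True
    have "retraction ` geom_simplex \<sigma> \<subseteq>
        geom_simplex (insert v \<sigma> \<inter> X) \<union> geom_simplex (insert v \<sigma> \<inter> Y)"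
      using retraction_crossing_simplex(2)[OF \<sigma> True] by blast
    then show ?thesis
      using crossing_simplex_faces[OF \<sigma> True] cont
      by (intro exI[of _ "{insert v \<sigma> \<inter> X, insert v \<sigma> \<inter> Y}"]) auto
  next
    case False
    then show ?thesis
      using noncrossing_simplex[OF \<sigma> False] cont by (intro exI[of _ "{\<sigma>}"]) auto
  qed
qed

lemma retraction_fixes_KXY: "x \<in> geom_realization KXY \<Longrightarrow> retraction x = x"
  using noncrossing_simplex(2)
  by (fastforce simp: geom_realization_def full_subcomplex_def crossing_def)

lemma retraction_homotopic_id:
  "homotopic_with (\<lambda>h. \<forall>x\<in>topspace (realization_top KXY). h x = x)
     (realization_top K) (realization_top K) retraction (\<lambda>x. x)"
proof -
  define H where "H = (\<lambda>(t, x). (\<lambda>i. t * x i + (1 - t) * retraction x i))"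
  have "continuous_map (prod_topology (top_of_set {0..1}) (realization_top K))
      (realization_top K) H"
  proof (rule continuous_map_prod_realization_top[OF compact_Icc finite_simplices])
    fix \<sigma> assume \<sigma>: "\<sigma> \<in> K"
    then have fin: "finite \<sigma>"
      using finite_simplices by blast
    have cont: "continuous_on ({0..1} \<times> geom_simplex \<sigma>) H"
      unfolding H_def by (intro continuous_on_segment_homotopy continuous_on_drain_to fin)
    show "\<exists>T. finite T \<and> T \<subseteq> K \<and> H ` ({0..1} \<times> geom_simplex \<sigma>) \<subseteq> \<Union>(geom_simplex ` T) \<and>
        continuous_on ({0..1} \<times> geom_simplex \<sigma>) H"
    proof (cases "crossing X Y \<sigma>")
      case True
      have "H (t, x) \<in> geom_simplex (insert v \<sigma>)" if "t \<in> {0..1}" "x \<in> geom_simplex \<sigma>" for t x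
      proof -
        have "x \<in> geom_simplex (insert v \<sigma>)"
          using geom_simplex_mono[OF that(2)] fin by blast
        then show ?thesis
          using geom_simplex_segment[OF _ retraction_crossing_simplex(1)[OF \<sigma> True that(2)]] that(1)
          by (simp add: H_def)
      qed
      then show ?thesis
        using cone[OF \<sigma> True] cont by (intro exI[of _ "{insert v \<sigma>}"]) auto
    next
      case False
      have "H (t, x) = x" if "x \<in> geom_simplex \<sigma>" for t x
        using noncrossing_simplex(2)[OF \<sigma> False that] by (simp add: H_def algebra_simps)
      then show ?thesis
        using \<sigma> cont by (intro exI[of _ "{\<sigma>}"]) auto
    qed
  qed
  moreover have "H (t, x) = x" if "x \<in> geom_realization KXY" for t x
    using retraction_fixes_KXY[OF that] by (simp add: H_def algebra_simps)
  ultimately show ?thesis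
    unfolding homotopic_with_def by (intro exI[of _ H]) (auto simp: H_def)
qed

theorem weak_equivalence_KXY:
  "weak_equivalence (realization_top KXY) (realization_top K) (\<lambda>x. x)"
proof (rule weak_equivalence_deformation_retract)
  show "continuous_map (realization_top KXY) (realization_top K) (\<lambda>x. x)"
    using finite_simplices
    by (intro continuous_map_realization_top_subcomplex) (auto simp: full_subcomplex_def)
qed (use continuous_map_retraction retraction_fixes_KXY retraction_homotopic_id in auto)

end

section \<open>Finding the cone vertex\<close>

lemma two_le_card: "finite A \<Longrightarrow> x \<in> A \<Longrightarrow> y \<in> A \<Longrightarrow> x \<noteq> y \<Longrightarrow> 2 \<le> card A"
  using card_mono[of A "{x, y}"] by simp

lemma clique_complex_insert:
  assumes K: "simplicial_complex K" "clique_complex K" and \<sigma>: "\<sigma> \<in> K" "2 \<le> card \<sigma>"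
    and adj: "\<And>u. u \<in> \<sigma> \<Longrightarrow> u \<noteq> v \<Longrightarrow> {v, u} \<in> K"
  shows "insert v \<sigma> \<in> K"
proof -
  have "finite (insert v \<sigma>)"
    using simplicial_complex_finite[OF K(1) \<sigma>(1)] by simp
  moreover have "2 \<le> card (insert v \<sigma>)"
    using \<sigma>(2) card_insert_le[of \<sigma> v] by linarith
  moreover have "{u, w} \<in> K" if uw: "u \<in> insert v \<sigma>" "w \<in> insert v \<sigma>" "u \<noteq> w" for u w
  proof -
    consider "u = v" | "w = v" | "u \<in> \<sigma>" "w \<in> \<sigma>"
      using uw by blast
    then show ?thesis
    proof cases
      case 1
      then show ?thesis using adj[of w] uw by auto
    next
      case 2
      then show ?thesis using adj[of u] uw by (auto simp: insert_commute)
    next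
      case 3
      then show ?thesis using simplicial_complex_face[OF K(1) \<sigma>(1), of "{u, w}"] by auto
    qed
  qed
  ultimately show ?thesis
    using K(2) unfolding clique_complex_def by blast
qed

lemma cone_over_crossings_if_edges:
  assumes K: "simplicial_complex K" "clique_complex K" and cover: "X \<union> Y = vertices K"
    and edge: "\<And>x y. x \<in> X - Y \<Longrightarrow> y \<in> Y - X \<Longrightarrow> {x, y} \<in> K \<Longrightarrow> v \<in> X \<inter> Y \<and> {v, x, y} \<in> K"
    and link: "\<And>x y u. x \<in> X - Y \<Longrightarrow> y \<in> Y - X \<Longrightarrow> u \<in> X \<inter> Y \<Longrightarrow> {u, x, y} \<in> K \<Longrightarrow>
      {v, u} \<in> K"
  shows "cone_over_crossings K X Y v"
proof
  fix \<sigma> assume \<sigma>: "\<sigma> \<in> K" "crossing X Y \<sigma>"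
  then obtain x y where xy: "x \<in> \<sigma>" "y \<in> \<sigma>" "x \<in> X - Y" "y \<in> Y - X"
    by (auto simp: crossing_def)
  have face: "\<mu> \<in> K" if "\<mu> \<subseteq> \<sigma>" "\<mu> \<noteq> {}" for \<mu>
    using simplicial_complex_face[OF K(1) \<sigma>(1) that] .
  have "{v, u} \<in> K" if u: "u \<in> \<sigma>" "u \<noteq> v" for u
  proof -
    have "u \<in> X \<union> Y"
      using simplex_subset_vertices[OF K(1) \<sigma>(1)] cover u by auto
    then consider "u \<in> X - Y" | "u \<in> Y - X" | "u \<in> X \<inter> Y"
      by blast
    then show ?thesis
    proof cases
      case 1
      then have "{v, u, y} \<in> K"
        using edge[of u y] face[of "{u, y}"] u xy by auto
      then show ?thesis
        using simplicial_complex_face[OF K(1), of "{v, u, y}" "{v, u}"] by auto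
    next
      case 2
      then have "{v, x, u} \<in> K"
        using edge[of x u] face[of "{x, u}"] u xy by auto
      then show ?thesis
        using simplicial_complex_face[OF K(1), of "{v, x, u}" "{v, u}"] by auto
    next
      case 3
      then show ?thesis
        using link[of x y u] face[of "{u, x, y}"] u xy by auto
    qed
  qed
  moreover have "2 \<le> card \<sigma>"
    using xy two_le_card[OF simplicial_complex_finite[OF K(1) \<sigma>(1)]] by blast
  moreover have "v \<in> X \<inter> Y"
    using edge[of x y] face[of "{x, y}"] xy by auto
  ultimately show "v \<in> X \<inter> Y \<and> insert v \<sigma> \<in> K"
    using clique_complex_insert[OF K \<sigma>(1)] by blast
qed (use K cover in auto)

lemma crossing_edge_not_in_P:
  assumes "{x, y} \<in> K" "x \<in> X - Y" "y \<in> Y - X"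
  shows "{x, y} \<in> edges K - {\<sigma> \<in> K. \<sigma> \<subseteq> X \<or> \<sigma> \<subseteq> Y \<or> \<sigma> \<inter> (X \<inter> Y) \<noteq> {}}"
proof -
  have "x \<noteq> y"
    using assms by auto
  then show ?thesis
    using assms by (auto simp: edges_def)
qed

lemma singleton_in_St_iff: "{w} \<in> St K \<tau> A \<longleftrightarrow> w \<in> A \<and> insert w \<tau> \<in> K"
  by (auto simp: St_def)

lemma central_vertex_St_adjacent:
  assumes "simplicial_complex K" "central_vertex (St K \<tau> A) v" "{w} \<in> St K \<tau> A"
  shows "{v, w} \<in> K"
proof -
  have "{w} \<union> {v} \<in> St K \<tau> A"
    using assms(2,3) by (auto simp: central_vertex_def central_simplex_def)
  then have "{v, w} \<union> \<tau> \<in> K"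
    by (auto simp: St_def insert_commute)
  then show ?thesis
    using simplicial_complex_face[OF assms(1)] by blast
qed

lemma cone_over_crossings_if_St_adjacent:
  fixes K :: "'a set set" and X Y :: "'a set" and v :: 'a
  defines "A \<equiv> X \<inter> Y"
  defines "P \<equiv> {\<sigma> \<in> K. \<sigma> \<subseteq> X \<or> \<sigma> \<subseteq> Y \<or> \<sigma> \<inter> A \<noteq> {}}"
  assumes K: "simplicial_complex K" "clique_complex K" and cover: "X \<union> Y = vertices K"
    and in_St: "\<forall>\<tau>\<in>edges K - P. {v} \<in> St K \<tau> A"
    and adj: "\<forall>\<tau>\<in>edges K - P. \<forall>w. {w} \<in> St K \<tau> A \<longrightarrow> {v, w} \<in> K"
  shows "cone_over_crossings K X Y v"
proof (rule cone_over_crossings_if_edges[OF K cover])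
  fix x y assume "x \<in> X - Y" "y \<in> Y - X" "{x, y} \<in> K"
  then have "{x, y} \<in> edges K - P"
    unfolding P_def A_def by (intro crossing_edge_not_in_P)
  then show "v \<in> X \<inter> Y \<and> {v, x, y} \<in> K"
    using in_St by (auto simp: singleton_in_St_iff A_def)
next
  fix x y u assume xy: "x \<in> X - Y" "y \<in> Y - X" and u: "u \<in> X \<inter> Y" "{u, x, y} \<in> K"
  then have "{x, y} \<in> K"
    using simplicial_complex_face[OF K(1) u(2), of "{x, y}"] by auto
  then have "{x, y} \<in> edges K - P"
    unfolding P_def A_def using xy by (intro crossing_edge_not_in_P)
  moreover have "{u} \<in> St K {x, y} A"
    using u by (simp add: singleton_in_St_iff A_def)
  ultimately show "{v, u} \<in> K"
    using adj by blast
qed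

lemma cone_over_crossings_if_St_central:
  fixes K :: "'a set set" and X Y :: "'a set" and v :: 'a
  defines "A \<equiv> X \<inter> Y"
  defines "P \<equiv> {\<sigma> \<in> K. \<sigma> \<subseteq> X \<or> \<sigma> \<subseteq> Y \<or> \<sigma> \<inter> A \<noteq> {}}"
  assumes K: "simplicial_complex K" "clique_complex K" and cover: "X \<union> Y = vertices K"
    and in_St: "\<forall>\<tau>\<in>edges K - P. {v} \<in> St K \<tau> A"
    and central: "\<forall>\<tau>\<in>edges K - P. central_vertex (St K \<tau> A) v"
  shows "cone_over_crossings K X Y v"
  using cone_over_crossings_if_St_adjacent[OF K cover] in_St central
    central_vertex_St_adjacent[OF K(1)]
  unfolding A_def P_def by blast

lemma cone_over_crossings_if_cone_on_small_simplices:
  fixes K :: "'a set set" and X Y :: "'a set" and v :: 'a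
  defines "A \<equiv> X \<inter> Y"
  assumes K: "simplicial_complex K" "clique_complex K" and cover: "X \<union> Y = vertices K"
    and v: "v \<in> A"
    and cone: "\<forall>\<tau>\<in>K. card (\<tau> \<inter> (X - A)) = 1 \<and> card (\<tau> \<inter> (Y - A)) = 1 \<and> card (\<tau> \<inter> A) \<le> 1
                 \<longrightarrow> insert v \<tau> \<in> K"
  shows "cone_over_crossings K X Y v"
proof (rule cone_over_crossings_if_edges[OF K cover])
  fix x y assume xy: "x \<in> X - Y" "y \<in> Y - X" "{x, y} \<in> K"
  then have "{x, y} \<inter> (X - A) = {x}" "{x, y} \<inter> (Y - A) = {y}" "{x, y} \<inter> A = {}"
    by (auto simp: A_def)
  then show "v \<in> X \<inter> Y \<and> {v, x, y} \<in> K"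
    using cone xy(3) v by (simp add: A_def)
next
  fix x y u assume xy: "x \<in> X - Y" "y \<in> Y - X" and u: "u \<in> X \<inter> Y" "{u, x, y} \<in> K"
  then have "{u, x, y} \<inter> (X - A) = {x}" "{u, x, y} \<inter> (Y - A) = {y}" "{u, x, y} \<inter> A = {u}"
    by (auto simp: A_def)
  then have "insert v {u, x, y} \<in> K"
    using cone u(2) by simp
  then show "{v, u} \<in> K"
    using simplicial_complex_face[OF K(1), of "insert v {u, x, y}" "{v, u}"] by auto
qed

theorem proposition9p5:
  fixes K :: "'a set set" and X Y :: "'a set"
  assumes "simplicial_complex K"
    and "clique_complex K"
    and "X \<union> Y = vertices K"
  defines "A \<equiv> X \<inter> Y"
  defines "P \<equiv> {\<sigma>\<in>K. \<sigma> \<subseteq> X \<or> \<sigma> \<subseteq> Y \<or> \<sigma> \<inter> A \<noteq> {}}"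
  assumes "(\<exists>v. (\<forall>\<tau>\<in>edges K - P. {v} \<in> St K \<tau> A) \<and>
              (\<forall>\<tau>\<in>edges K - P. \<forall>w. {w} \<in> St K \<tau> A \<longrightarrow> {v, w} \<in> K))
         \<or> (\<exists>v. (\<forall>\<tau>\<in>edges K - P. {v} \<in> St K \<tau> A) \<and>
              (\<forall>\<tau>\<in>edges K - P. central_vertex (St K \<tau> A) v))
         \<or> (\<exists>v\<in>A. \<forall>\<tau>\<in>K. card (\<tau> \<inter> (X - A)) = 1 \<and> card (\<tau> \<inter> (Y - A)) = 1
                         \<and> card (\<tau> \<inter> A) \<le> 1 \<longrightarrow> insert v \<tau> \<in> K)"
  shows "weak_equivalence
           (realization_top (full_subcomplex K X \<union> full_subcomplex K Y))
           (realization_top K) (\<lambda>x. x)"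
proof -
  obtain v where "cone_over_crossings K X Y v"
    using assms(6) unfolding P_def A_def
    by (elim disjE exE bexE conjE)
      (rule that, erule (1) cone_over_crossings_if_St_adjacent[OF assms(1-3)]
        cone_over_crossings_if_St_central[OF assms(1-3)]
        cone_over_crossings_if_cone_on_small_simplices[OF assms(1-3)])+
  then show ?thesis
    by (rule cone_over_crossings.weak_equivalence_KXY)
qed

end
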